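(* Let $\mathcal M=(V,E,c_V,L,\Theta)$ be a molecular graph and $\mathcal C_{\mathcal M}$ its conformational space. Suppose $\varphi,\psi\in\mathcal C_{\mathcal M}$ and $(v,w_1,w_2,w_3)\in E_3$ satisfy $O_\varphi(v,w_1,w_2,w_3)=-O_\psi(v,w_1,w_2,w_3)\neq 0$. Then $\varphi$ and $\psi$ lie in different path components of $\mathcal C_{\mathcal M}$. In particular, if $\mathcal C_{\mathcal M}\neq\emptyset$ and $\mathcal M$ is not planar, then $\mathcal C_{\mathcal M}$ is not path connected.
   Context: A molecular graph is a tuple $\mathcal M=(V,E,c_V,L,\Theta)$ where: $V$ is a finite set; $E\subseteq V\times V$ satisfies $(v,v)\notin E$ and $(v,w)\in E\iff (w,v)\in E$; $c_V:V\to\mathbb N$ is arbitrary; $L:E\to(0,\infty)$ with $L(v,w)=L(w,v)$; and $\Theta:E_2\to(0,\pi]$ with $\Theta(v,w_1,w_2)=\Theta(v,w_2,w_1)$, where $E_2=\{(v,w_1,w_2)\in V^3: (v,w_1),(v,w_2)\in E,\ w_1\neq w_2\}$. The geometric realisation of $\mathcal M$ is the metric graph obtained by gluing a segment $[0,L(e)]$ for each edge $e$ along the vertices. A configuration (embedding) of $\mathcal M$ is an injective continuous map $\varphi$ from the geometric realisation into $\mathbb R^3$ such that (i) the restriction of $\varphi$ to each edge is an isometric embedding, and (ii) for each $(v,w_1,w_2)\in E_2$ the angle at $\varphi(v)$ between the segments to $\varphi(w_1)$ and $\varphi(w_2)$ equals $\Theta(v,w_1,w_2)$. Such $\varphi$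 is determined by $(\varphi(v_1),\dots,\varphi(v_n))\in\mathbb R^{3n}$ where $V=\{v_1,\dots,v_n\}$; the conformational space $\mathcal C_{\mathcal M}$ is the set of all configurations, topologised as a subspace of $\mathbb R^{3n}$ via this injection. Let $E_3=\{(v,w_1,w_2,w_3)\in V^4:(v,w_i)\in E \text{ for } i=1,2,3,\ w_i\neq w_j \text{ for } i\neq j\}$. The orientation of $\varphi$ is $O_\varphi:E_3\to\{-1,0,1\}$, $O_\varphi(v,w_1,w_2,w_3)=\operatorname{sign}\big((\varphi(w_1)-\varphi(v))\cdot[(\varphi(w_2)-\varphi(v))\times(\varphi(w_3)-\varphi(v))]\big)$. A tuple in $E_3$ is planar if $O_\varphi$ vanishes on it for every (equivalently some) $\varphi\in\mathcal C_{\mathcal M}$, and $\mathcal M$ is planar if every tuple of $E_3$ is planar. *)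

theory Defs
  imports "HOL-Analysis.Analysis" "HOL-Analysis.Cross3"
begin

(* Vertex set V is the (finite) universe of the type 'v. A configuration is recorded by the
   vertex positions, i.e. an element of (real^3)^'v = R^{3n}, with the subspace topology. *)

definition vangle :: "real^3 \<Rightarrow> real^3 \<Rightarrow> real" where
  "vangle u w = arccos ((u \<bullet> w) / (norm u * norm w))"

definition E2 :: "('v \<times> 'v) set \<Rightarrow> ('v \<times> 'v \<times> 'v) set" where
  "E2 E = {(v, w1, w2). (v, w1) \<in> E \<and> (v, w2) \<in> E \<and> w1 \<noteq> w2}"

definition E3 :: "('v \<times> 'v) set \<Rightarrow> ('v \<times> 'v \<times> 'v \<times> 'v) set" where
  "E3 E = {(v, w1, w2, w3). (v, w1) \<in> E \<and> (v, w2) \<in> E \<and> (v, w3) \<in> E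
             \<and> w1 \<noteq> w2 \<and> w1 \<noteq> w3 \<and> w2 \<noteq> w3}"

definition molecular_graph ::
  "('v::finite \<times> 'v) set \<Rightarrow> ('v \<Rightarrow> nat) \<Rightarrow> ('v \<Rightarrow> 'v \<Rightarrow> real) \<Rightarrow> ('v \<Rightarrow> 'v \<Rightarrow> 'v \<Rightarrow> real) \<Rightarrow> bool"
where
  "molecular_graph E cV L \<Theta> \<longleftrightarrow>
     (\<forall>v. (v, v) \<notin> E) \<and> (\<forall>v w. (v, w) \<in> E \<longleftrightarrow> (w, v) \<in> E) \<and>
     (\<forall>(v, w) \<in> E. L v w > 0 \<and> L v w = L w v) \<and>
     (\<forall>(v, w1, w2) \<in> E2 E. 0 < \<Theta> v w1 w2 \<and> \<Theta> v w1 w2 \<le> pi \<and> \<Theta> v w1 w2 = \<Theta> v w2 w1)"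

text \<open>Geometric realisation: points are vertices (Inl v) or interior points of edges
  (Inr (v, w, t)) at distance t from v along the edge (v,w), with 0 < t < L v w.\<close>

definition realisation_pts :: "('v \<times> 'v) set \<Rightarrow> ('v \<Rightarrow> 'v \<Rightarrow> real) \<Rightarrow> ('v + ('v \<times> 'v \<times> real)) set" where
  "realisation_pts E L = range Inl \<union> {Inr (v, w, t) | v w t. (v, w) \<in> E \<and> 0 < t \<and> t < L v w}"

definition same_pt :: "('v \<Rightarrow> 'v \<Rightarrow> real) \<Rightarrow> ('v + ('v \<times> 'v \<times> real)) \<Rightarrow> ('v + ('v \<times> 'v \<times> real)) \<Rightarrow> bool" where
  "same_pt L x y \<longleftrightarrow> x = y \<or> (\<exists>v w t. x = Inr (v, w, t) \<and> y = Inr (w, v, L v w - t))"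

text \<open>The map on the realisation induced by vertex positions p: each edge is mapped by the
  affine (unit-speed, once the edge lengths are correct) parametrisation of the segment.\<close>

fun realisation_map :: "('v \<Rightarrow> 'v \<Rightarrow> real) \<Rightarrow> real^3^'v \<Rightarrow> ('v + ('v \<times> 'v \<times> real)) \<Rightarrow> real^3" where
  "realisation_map L p (Inl v) = p $ v"
| "realisation_map L p (Inr (v, w, t)) = p $ v + (t / L v w) *\<^sub>R (p $ w - p $ v)"

definition configuration ::
  "('v::finite \<times> 'v) set \<Rightarrow> ('v \<Rightarrow> 'v \<Rightarrow> real) \<Rightarrow> ('v \<Rightarrow> 'v \<Rightarrow> 'v \<Rightarrow> real) \<Rightarrow> real^3^'v \<Rightarrow> bool"
where
  "configuration E L \<Theta> p \<longleftrightarrow>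
     (\<forall>(v, w) \<in> E. dist (p $ v) (p $ w) = L v w) \<and>
     (\<forall>(v, w1, w2) \<in> E2 E. vangle (p $ w1 - p $ v) (p $ w2 - p $ v) = \<Theta> v w1 w2) \<and>
     (\<forall>x \<in> realisation_pts E L. \<forall>y \<in> realisation_pts E L.
         realisation_map L p x = realisation_map L p y \<longrightarrow> same_pt L x y)"

definition conf_space ::
  "('v::finite \<times> 'v) set \<Rightarrow> ('v \<Rightarrow> 'v \<Rightarrow> real) \<Rightarrow> ('v \<Rightarrow> 'v \<Rightarrow> 'v \<Rightarrow> real) \<Rightarrow> (real^3^'v) set"
where
  "conf_space E L \<Theta> = {p. configuration E L \<Theta> p}"

definition orientation :: "real^3^'v \<Rightarrow> 'v \<Rightarrow> 'v \<Rightarrow> 'v \<Rightarrow> 'v \<Rightarrow> real" where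
  "orientation p v w1 w2 w3 =
     sgn ((p $ w1 - p $ v) \<bullet> cross3 (p $ w2 - p $ v) (p $ w3 - p $ v))"

definition planar_tuple ::
  "('v::finite \<times> 'v) set \<Rightarrow> ('v \<Rightarrow> 'v \<Rightarrow> real) \<Rightarrow> ('v \<Rightarrow> 'v \<Rightarrow> 'v \<Rightarrow> real) \<Rightarrow> 'v \<times> 'v \<times> 'v \<times> 'v \<Rightarrow> bool"
where
  "planar_tuple E L \<Theta> t \<longleftrightarrow>
     (\<forall>p \<in> conf_space E L \<Theta>. case t of (v, w1, w2, w3) \<Rightarrow> orientation p v w1 w2 w3 = 0)"

definition planar_mg ::
  "('v::finite \<times> 'v) set \<Rightarrow> ('v \<Rightarrow> 'v \<Rightarrow> real) \<Rightarrow> ('v \<Rightarrow> 'v \<Rightarrow> 'v \<Rightarrow> real) \<Rightarrow> bool"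
where
  "planar_mg E L \<Theta> \<longleftrightarrow> (\<forall>t \<in> E3 E. planar_tuple E L \<Theta> t)"

end

theory Submission
  imports Defs
begin

text \<open>The square of the triple product at a vertex is the Gram determinant of the three edge
  vectors, and these inner products are prescribed by the bond lengths and bond angles. Hence the
  triple product has constant absolute value on the conformational space, so a continuous path of
  configurations cannot change its sign. Reflecting a configuration through the origin preserves
  all lengths and angles but reverses every orientation, which gives the second claim.\<close>

lemma inner_cross3_power2:
  fixes a b c :: "real^3"
  shows "(a \<bullet> cross3 b c)^2 =
    (a\<bullet>a) * ((b\<bullet>b) * (c\<bullet>c) - (b\<bullet>c)^2) - (a\<bullet>b) * ((a\<bullet>b) * (c\<bullet>c) - (b\<bullet>c) * (a\<bullet>c))
    + (a\<bullet>c) * ((a\<bullet>b) * (b\<bullet>c) - (b\<bullet>b) * (a\<bullet>c))"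
  unfolding cross3_def inner_vec_def sum_3 by (simp add: power2_eq_square vector_def algebra_simps)

lemma inner_eq_norm_mult_cos_vangle:
  fixes a b :: "real^3"
  shows "a \<bullet> b = norm a * norm b * cos (vangle a b)"
proof (cases "a = 0 \<or> b = 0")
  case False
  then have pos: "norm a * norm b > 0" by simp
  have "\<bar>a \<bullet> b\<bar> \<le> norm a * norm b" by (rule Cauchy_Schwarz_ineq2)
  then have "-1 \<le> (a \<bullet> b) / (norm a * norm b)" "(a \<bullet> b) / (norm a * norm b) \<le> 1"
    using pos by (auto simp: divide_simps abs_le_iff)
  then have "cos (vangle a b) = (a \<bullet> b) / (norm a * norm b)"
    unfolding vangle_def by (simp add: cos_arccos)
  then show ?thesis using pos by simp
qed auto

lemma conf_space_edge_norm:
  assumes "p \<in> conf_space E L \<Theta>" "(v, w) \<in> E"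
  shows "norm (p $ w - p $ v) = L v w"
  using assms by (auto simp: conf_space_def configuration_def dist_norm norm_minus_commute)

lemma conf_space_edge_inner_eq:
  assumes p: "p \<in> conf_space E L \<Theta>" and q: "q \<in> conf_space E L \<Theta>"
    and e: "(v, w1) \<in> E" "(v, w2) \<in> E"
  shows "(p $ w1 - p $ v) \<bullet> (p $ w2 - p $ v) = (q $ w1 - q $ v) \<bullet> (q $ w2 - q $ v)"
proof (cases "w1 = w2")
  case True
  then show ?thesis
    using conf_space_edge_norm[OF p e(1)] conf_space_edge_norm[OF q e(1)]
    by (metis power2_norm_eq_inner)
next
  case False
  then have "(v, w1, w2) \<in> E2 E" using e by (simp add: E2_def)
  then have "vangle (r $ w1 - r $ v) (r $ w2 - r $ v) = \<Theta> v w1 w2"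
    if "r \<in> conf_space E L \<Theta>" for r
    using that by (auto simp: conf_space_def configuration_def)
  then show ?thesis
    using p q e by (simp add: inner_eq_norm_mult_cos_vangle conf_space_edge_norm)
qed

definition triple_product :: "real^3^'v \<Rightarrow> 'v \<Rightarrow> 'v \<Rightarrow> 'v \<Rightarrow> 'v \<Rightarrow> real" where
  "triple_product p v w1 w2 w3 = (p $ w1 - p $ v) \<bullet> cross3 (p $ w2 - p $ v) (p $ w3 - p $ v)"

lemma orientation_eq_sgn_triple_product:
  "orientation p v w1 w2 w3 = sgn (triple_product p v w1 w2 w3)"
  unfolding orientation_def triple_product_def ..

lemma continuous_on_triple_product: "continuous_on S (\<lambda>p. triple_product p v w1 w2 w3)"
  unfolding triple_product_def by (intro continuous_intros continuous_on_cross)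

lemma triple_product_power2_eq:
  assumes p: "p \<in> conf_space E L \<Theta>" and q: "q \<in> conf_space E L \<Theta>"
    and t: "(v, w1, w2, w3) \<in> E3 E"
  shows "(triple_product p v w1 w2 w3)^2 = (triple_product q v w1 w2 w3)^2"
proof -
  have e: "(v, w1) \<in> E" "(v, w2) \<in> E" "(v, w3) \<in> E" using t by (auto simp: E3_def)
  show ?thesis
    unfolding triple_product_def inner_cross3_power2
    by (simp only: conf_space_edge_inner_eq[OF p q] e)
qed

lemma path_component_sgn_eq:
  fixes f :: "'a::topological_space \<Rightarrow> real"
  assumes f: "continuous_on S f" and xy: "path_component S x y" and nz: "0 \<notin> f ` S"
  shows "sgn (f x) = sgn (f y)"
proof (rule ccontr)
  assume neq: "sgn (f x) \<noteq> sgn (f y)"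
  let ?C = "path_component_set S x"
  have C: "?C \<subseteq> S" "x \<in> ?C" "y \<in> ?C"
    using xy path_component_subset path_component_refl_eq path_component_mem(1) by fastforce+
  have "connected (f ` ?C)"
    using f C(1) by (intro connected_continuous_image path_connected_imp_connected
        path_connected_path_component) (auto intro: continuous_on_subset)
  moreover have "f x \<in> f ` ?C" "f y \<in> f ` ?C" using C by auto
  moreover have "min (f x) (f y) \<le> 0" "0 \<le> max (f x) (f y)"
    using neq by (auto simp: sgn_if split: if_splits)
  ultimately have "0 \<in> f ` ?C"
    unfolding connected_iff_interval by (cases "f x \<le> f y") (auto simp: min_def max_def)
  then show False using C(1) nz by blast
qed

lemma conf_space_uminus:
  assumes "p \<in> conf_space E L \<Theta>"
  shows "- p \<in> conf_space E L \<Theta>"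
proof -
  have "realisation_map L (- p) x = - realisation_map L p x" for x
    by (cases x) (auto simp: algebra_simps)
  moreover have "vangle (- a) (- b) = vangle a b" for a b :: "real^3"
    unfolding vangle_def by simp
  ultimately show ?thesis
    using assms unfolding conf_space_def configuration_def mem_Collect_eq
    by (simp only: vector_uminus_component minus_diff_minus dist_minus neg_equal_iff_equal)
qed

lemma orientation_uminus: "orientation (- p) v w1 w2 w3 = - orientation p v w1 w2 w3"
proof -
  have "(- p) $ w - (- p) $ v = - (p $ w - p $ v)" for w by simp
  moreover have "cross3 (- a) (- b) = cross3 a b" for a b :: "real^3"
    by (simp add: cross3_def vec_eq_iff vector_def)
  ultimately show ?thesis unfolding orientation_def by (simp only: inner_minus_left sgn_minus)
qed

lemma path_component_conf_space_orientation_eq: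
  assumes pq: "path_component (conf_space E L \<Theta>) p q" and t: "(v, w1, w2, w3) \<in> E3 E"
  shows "orientation p v w1 w2 w3 = orientation q v w1 w2 w3"
proof (cases "triple_product p v w1 w2 w3 = 0")
  case True
  have "p \<in> conf_space E L \<Theta>" "q \<in> conf_space E L \<Theta>"
    using pq path_component_mem by blast+
  then have "triple_product q v w1 w2 w3 = 0"
    using True triple_product_power2_eq[OF _ _ t] by (metis power_zero_numeral zero_eq_power2)
  with True show ?thesis by (simp add: orientation_eq_sgn_triple_product)
next
  case False
  have "p \<in> conf_space E L \<Theta>" using pq path_component_mem(1) by blast
  then have "0 \<notin> (\<lambda>r. triple_product r v w1 w2 w3) ` conf_space E L \<Theta>"
    using False triple_product_power2_eq[OF _ _ t] by force
  with pq show ?thesis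
    unfolding orientation_eq_sgn_triple_product
    by (rule path_component_sgn_eq[OF continuous_on_triple_product])
qed

theorem mainTheorem1:
  fixes E :: "('v::finite \<times> 'v) set" and cV :: "'v \<Rightarrow> nat"
    and L :: "'v \<Rightarrow> 'v \<Rightarrow> real" and \<Theta> :: "'v \<Rightarrow> 'v \<Rightarrow> 'v \<Rightarrow> real"
  assumes "molecular_graph E cV L \<Theta>"
  shows "(\<forall>\<phi> \<psi> v w1 w2 w3.
            \<phi> \<in> conf_space E L \<Theta> \<and> \<psi> \<in> conf_space E L \<Theta> \<and> (v, w1, w2, w3) \<in> E3 E \<and>
            orientation \<phi> v w1 w2 w3 = - orientation \<psi> v w1 w2 w3 \<and>
            orientation \<phi> v w1 w2 w3 \<noteq> 0
            \<longrightarrow> \<not> path_component (conf_space E L \<Theta>) \<phi> \<psi>)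
       \<and> (conf_space E L \<Theta> \<noteq> {} \<and> \<not> planar_mg E L \<Theta> \<longrightarrow> \<not> path_connected (conf_space E L \<Theta>))"
proof -
  let ?S = "conf_space E L \<Theta>"
  have separated: "\<not> path_component ?S \<phi> \<psi>"
    if "(v, w1, w2, w3) \<in> E3 E" "orientation \<phi> v w1 w2 w3 = - orientation \<psi> v w1 w2 w3"
      "orientation \<phi> v w1 w2 w3 \<noteq> 0"
    for \<phi> \<psi> v w1 w2 w3
    using that path_component_conf_space_orientation_eq by fastforce
  moreover have "\<not> path_connected ?S" if nonplanar: "\<not> planar_mg E L \<Theta>"
  proof -
    obtain v w1 w2 w3 p where "(v, w1, w2, w3) \<in> E3 E" "p \<in> ?S" "orientation p v w1 w2 w3 \<noteq> 0"
      using nonplanar unfolding planar_mg_def planar_tuple_def by (fastforce split: prod.splits)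
    moreover have "- p \<in> ?S" using \<open>p \<in> ?S\<close> by (rule conf_space_uminus)
    ultimately have "\<not> path_component ?S p (- p)"
      using separated by (simp add: orientation_uminus)
    with \<open>- p \<in> ?S\<close> \<open>p \<in> ?S\<close> show ?thesis
      unfolding path_connected_component by blast
  qed
  ultimately show ?thesis by blast
qed

end
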